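(* Let $m\ge2$, $1\le i\le m-1$, $0\le j\le 2p-1$, $0\le k\le m-1$. There is a unique integer $\ell$ with $-(m-1)p\le\ell\le(m+1)p-1$ such that $e^{\frac{\ell-i/m}{2p}\alpha}\in R(i,j,k)$. Moreover $e^{\frac{\ell-i/m}{2p}\alpha}$ is a lowest weight vector of $R(i,j,k)$ (of minimal conformal weight), and $$L(0)e^{\frac{\ell-i/m}{2p}\alpha}=h_{\ell+1-i/m,1}\,e^{\frac{\ell-i/m}{2p}\alpha},\qquad H(0)e^{\frac{\ell-i/m}{2p}\alpha}=\binom{\ell-i/m}{2p-1}e^{\frac{\ell-i/m}{2p}\alpha}.$$
   Context: Fix an integer $p\ge 2$. Let $L=\mathbb Z\alpha$ with $\langle\alpha,\alpha\rangle=2p$, $M(1)$ the Heisenberg vertex algebra, $V_L=M(1)\otimes\mathbb C[L]$ the lattice vertex algebra with conformal vector $\omega=\frac{1}{4p}\alpha(-1)^2\mathbf 1+\frac{p-1}{2p}\alpha(-2)\mathbf 1$, $L(n)=\omega_{n+1}$; $Q=e^\alpha_0$ is the screening operator; for $\gamma\in\mathbb Q\alpha$, $V_{L+\gamma}=M(1)\otimes\mathbb C[L+\gamma]$ with the usual vertex operators. $H=Qe^{-\alpha}$ has conformal weight $2p-1$, and $H(0)=H_{2p-2}$ denotes its zero mode. Put $h_{r,s}=\frac{(ps-r)^2-(p-1)^2}{4p}$ (for arbitrary complex $r$), and $\binom{x}{n}=x(x-1)\cdots(x-n+1)/n!$. For $1\le i\le m-1$, $0\le j\le2p-1$, $0\le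 k\le m-1$, $R(i,j,k)=\bigoplus_{s\in\mathbb Z}M(1)\otimes e^{\frac{j-i/m}{2p}\alpha+(ms+k)\alpha}$, a module for $\mathcal W(p)^{A_m}=\mathcal W(p)\cap\bigoplus_nM(1)\otimes e^{nm\alpha}$, where $\mathcal W(p)$ is the triplet vertex algebra (the Virasoro submodule of $V_L$ generated by $Q^ie^{-n\alpha}$, $0\le i\le2n$). *)

theory Defs
  imports Complex_Main "HOL-Library.Multiset"
begin

text \<open>
Concrete model of the generalized lattice vertex algebra
V = direct sum over c in Q of M(1) tensor e^{c alpha}, with <alpha,alpha> = 2p.
A vector is a finitely supported function  v c M,  where c :: rat labels e^{c alpha}
and the multiset M of naturals labels the monomial prod_{x in M} alpha(-(x+1)) 1 of M(1).
\<close>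

type_synonym vec = "rat \<Rightarrow> nat multiset \<Rightarrow> complex"

definition zvec :: vec where "zvec = (\<lambda>_ _. 0)"

definition scale :: "complex \<Rightarrow> vec \<Rightarrow> vec" where
  "scale a v = (\<lambda>c M. a * v c M)"

definition vsum :: "('i \<Rightarrow> vec) \<Rightarrow> 'i set \<Rightarrow> vec" where
  "vsum f I = (\<lambda>c M. \<Sum>x\<in>I. f x c M)"

definition supp :: "vec \<Rightarrow> (rat \<times> nat multiset) set" where
  "supp v = {(c, M). v c M \<noteq> 0}"

definition bv :: "rat \<Rightarrow> nat multiset \<Rightarrow> vec" where
  "bv c M = (\<lambda>c' M'. if c' = c \<and> M' = M then 1 else 0)"

definition linext :: "(rat \<Rightarrow> nat multiset \<Rightarrow> vec) \<Rightarrow> vec \<Rightarrow> vec" where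
  "linext T v = (\<lambda>c M. \<Sum>(c', M')\<in>supp v. v c' M' * T c' M' c M)"

definition deg :: "nat multiset \<Rightarrow> nat" where
  "deg M = (\<Sum>x\<in>#M. x + 1)"

text \<open>Heisenberg modes alpha(k), [alpha(a),alpha(b)] = 2p a delta_{a+b,0};
  alpha(0) acts on M(1) tensor e^{c alpha} by <alpha, c alpha> = 2pc.\<close>
definition amode :: "nat \<Rightarrow> int \<Rightarrow> vec \<Rightarrow> vec" where
  "amode p k v = (\<lambda>c M.
     if k < 0 then (if nat (-k) - 1 \<in># M then v c (M - {#nat (-k) - 1#}) else 0)
     else if k = 0 then of_nat (2*p) * of_rat c * v c M
     else of_nat (2*p) * of_int k * of_nat (count M (nat k - 1) + 1) * v c (M + {#nat k - 1#}))"

definition aprod :: "nat \<Rightarrow> int list \<Rightarrow> vec \<Rightarrow> vec" where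
  "aprod p ks v = foldr (amode p) ks v"

text \<open>partitions: multiset lam (x stands for the part x+1); coefficient 1/(prod n^{m_n} m_n!)\<close>
definition pcoef :: "nat multiset \<Rightarrow> complex" where
  "pcoef lam = 1 / (of_nat (\<Prod>x\<in>#lam. x + 1) * of_nat (\<Prod>x\<in>set_mset lam. fact (count lam x)))"

text \<open>coefficient of z^d in E^-(-b alpha, z) = exp(sum_{n>0} b alpha(-n) z^n / n)\<close>
definition Sminus :: "nat \<Rightarrow> rat \<Rightarrow> nat \<Rightarrow> vec \<Rightarrow> vec" where
  "Sminus p b d v = vsum (\<lambda>lam. scale (pcoef lam * (of_rat b) ^ size lam)
       (aprod p (map (\<lambda>x. - (int x + 1)) (sorted_list_of_multiset lam)) v)) {lam. deg lam = d}"

text \<open>coefficient of z^{-d} in E^+(-b alpha, z) = exp(- sum_{n>0} b alpha(n) z^{-n} / n)\<close>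
definition Tplus :: "nat \<Rightarrow> rat \<Rightarrow> nat \<Rightarrow> vec \<Rightarrow> vec" where
  "Tplus p b d v = vsum (\<lambda>lam. scale (pcoef lam * (- of_rat b) ^ size lam)
       (aprod p (map (\<lambda>x. int x + 1) (sorted_list_of_multiset lam)) v)) {lam. deg lam = d}"

text \<open>e_{b alpha}: u tensor e^{c alpha} |-> u tensor e^{(b+c) alpha} (trivial cocycle)\<close>
definition eshift :: "rat \<Rightarrow> vec \<Rightarrow> vec" where
  "eshift b v = (\<lambda>c M. v (c - b) M)"

text \<open>Modes of Y(e^{b alpha}, z) = E^-(-b alpha,z) E^+(-b alpha,z) e_{b alpha} z^{b alpha(0)}
  = sum_n (e^{b alpha})_n z^{-n-1} on a basis vector; n rational.\<close>
definition expmode_b :: "nat \<Rightarrow> rat \<Rightarrow> rat \<Rightarrow> rat \<Rightarrow> nat multiset \<Rightarrow> vec" where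
  "expmode_b p b n c M = vsum (\<lambda>d'.
      let d = of_nat d' - n - 1 - 2 * of_nat p * b * c in
      if d \<in> \<nat> then Sminus p b (nat \<lfloor>d\<rfloor>) (Tplus p b d' (eshift b (bv c M))) else zvec)
    {0..deg M}"

definition expmode :: "nat \<Rightarrow> rat \<Rightarrow> rat \<Rightarrow> vec \<Rightarrow> vec" where
  "expmode p b n v = linext (expmode_b p b n) v"

definition Qop :: "nat \<Rightarrow> vec \<Rightarrow> vec" where
  "Qop p = expmode p 1 0"

definition Hvec :: "nat \<Rightarrow> vec" where
  "Hvec p = Qop p (bv (-1) {#})"

text \<open>Modes of Y(w,z) for w = alpha(-k_1-1)...alpha(-k_r-1)1 in M(1):
  Y(w,z) = :d^{(k_1)}alpha(z) ... d^{(k_r)}alpha(z):, with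
  d^{(k)}alpha(z) = sum_j binom(-j-1,k) alpha(j) z^{-j-1-k}.
  The coefficient of z^{-N-1} acting on a basis vector: the sum over (j_1..j_r) is
  restricted to a box that contains all nonzero terms.\<close>
definition fmode_b :: "nat \<Rightarrow> nat multiset \<Rightarrow> int \<Rightarrow> rat \<Rightarrow> nat multiset \<Rightarrow> vec" where
  "fmode_b p K N c M =
    (let ks = sorted_list_of_multiset K; r = length ks;
         S = N + 1 - int r - int (sum_list ks);
         B = \<bar>S\<bar> + int (deg M) in
     vsum (\<lambda>js. scale (\<Prod>t<r. (of_int (- (js ! t) - 1) :: complex) gchoose (ks ! t))
                 (aprod p (filter (\<lambda>j. j < 0) js @ filter (\<lambda>j. 0 \<le> j) js) (bv c M)))
       {js. length js = r \<and> set js \<subseteq> {-B..B} \<and> sum_list js = S})"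

text \<open>N-th mode of Y(w,z) for w in M(1) = M(1) tensor e^0\<close>
definition fmode :: "nat \<Rightarrow> vec \<Rightarrow> int \<Rightarrow> vec \<Rightarrow> vec" where
  "fmode p w N v = linext (\<lambda>c M. vsum (\<lambda>K. scale (w 0 K) (fmode_b p K N c M)) {K. w 0 K \<noteq> 0}) v"

text \<open>conformal vector omega = 1/(4p) alpha(-1)^2 1 + (p-1)/(2p) alpha(-2) 1\<close>
definition omega :: "nat \<Rightarrow> vec" where
  "omega p = (\<lambda>c M. if c = 0 then
      (if M = {#0, 0#} then 1 / (4 * of_nat p)
       else if M = {#1#} then (of_nat p - 1) / (2 * of_nat p) else 0) else 0)"

definition L0 :: "nat \<Rightarrow> vec \<Rightarrow> vec" where
  "L0 p = fmode p (omega p) 1"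

definition H0 :: "nat \<Rightarrow> vec \<Rightarrow> vec" where
  "H0 p = fmode p (Hvec p) (2 * int p - 2)"

definition hrs :: "nat \<Rightarrow> complex \<Rightarrow> complex \<Rightarrow> complex" where
  "hrs p r s = ((of_nat p * s - r)^2 - (of_nat p - 1)^2) / (4 * of_nat p)"

definition Rmod :: "nat \<Rightarrow> nat \<Rightarrow> nat \<Rightarrow> nat \<Rightarrow> nat \<Rightarrow> vec set" where
  "Rmod p m i j k = {v. finite (supp v) \<and> (\<forall>c M. v c M \<noteq> 0 \<longrightarrow>
      (\<exists>s::int. c = (of_nat j - of_nat i / of_nat m) / (2 * of_nat p)
                     + of_nat m * of_int s + of_nat k))}"

definition evec :: "nat \<Rightarrow> nat \<Rightarrow> nat \<Rightarrow> int \<Rightarrow> vec" where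
  "evec p m i l = bv ((of_int l - of_nat i / of_nat m) / (2 * of_nat p)) {#}"

end

theory Submission
  imports Defs
begin

text \<open>
  On the sector \<open>M(1) \<otimes> e\<^bsup>c\<alpha>\<^esup>\<close> the zero mode \<open>\<alpha>(0)\<close> acts by \<open>2pc\<close>, and \<open>L(0)\<close>, the
  zero mode of \<open>(1/4p) :\<alpha>(z)\<^sup>2: + ((p-1)/2p) \<partial>\<alpha>(z)\<close>, acts on the monomial basis diagonally by
  \<open>deg M + p c\<^sup>2 - (p - 1) c\<close>; for \<open>M = 1\<close> and \<open>c = (l - i/m)/(2p)\<close> this is \<open>h\<^bsub>l+1-i/m,1\<^esub>\<close>.

  The vector \<open>H = Q e\<^bsup>-\<alpha>\<^esup>\<close> is the Schur polynomial \<open>\<Sum>\<^bsub>\<lambda> \<turnstile> 2p-1\<^esub> z\<^sub>\<lambda>\<^sup>-\<^sup>1 \<alpha>(-\<lambda>)1\<close>. On the vacuum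
  of a sector only the \<open>\<alpha>(0)\<close>-part of the field of \<open>\<alpha>(-\<lambda>)1\<close> survives, and since the field of
  \<open>\<alpha>(-n-1)1\<close> is \<open>\<partial>\<^sup>(\<^sup>n\<^sup>)\<alpha>(z)\<close> it contributes \<open>(-1)\<^bsup>|\<lambda>|-\<ell>(\<lambda>)\<^esup>(2pc)\<^bsup>\<ell>(\<lambda>)\<^esup>\<close>. The resulting sum
  \<open>\<Sum>\<^sub>\<lambda> z\<^sub>\<lambda>\<^sup>-\<^sup>1 (-1)\<^bsup>|\<lambda>|-\<ell>(\<lambda>)\<^esup> x\<^bsup>\<ell>(\<lambda>)\<^esup>\<close> is the coefficient of \<open>z\<^bsup>2p-1\<^esup>\<close> in
  \<open>exp(x log(1 + z)) = (1 + z)\<^sup>x\<close>, i.e. \<open>binom(x, 2p-1)\<close>; both sides satisfy the recursion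
  \<open>n a\<^sub>n = \<Sum>\<^sub>k (-1)\<^sup>k x a\<^bsub>n-k-1\<^esub>\<close> obtained by differentiating the generating function.

  The sectors of \<open>R(i,j,k)\<close> are those of \<open>e\<^bsup>(l - i/m)/(2p) \<alpha>\<^esup>\<close> with \<open>l \<equiv> j + 2pk (mod 2pm)\<close>,
  and the given window for \<open>l\<close> is one period. Completing the square, the lowest weight of such a
  sector is \<open>((l - i/m - (p-1))\<^sup>2 - (p-1)\<^sup>2)/(4p)\<close>, and the representative in the window is the
  one closest to \<open>p - 1\<close>.
\<close>

section \<open>Heisenberg modes on basis vectors\<close>

lemma bv_apply: "bv c M c' M' = (if c' = c \<and> M' = M then 1 else 0)"
  by (simp add: bv_def)

lemma supp_bv: "supp (bv c M) = {(c, M)}"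
  by (auto simp: supp_def bv_def)

lemma linext_bv: "linext T (bv c M) = T c M"
  unfolding linext_def supp_bv by (simp add: bv_def)

lemma scale_apply: "scale a v c M = a * v c M"
  by (simp add: scale_def)

lemma vsum_apply: "vsum f I c M = (\<Sum>x\<in>I. f x c M)"
  by (simp add: vsum_def)

lemma scale_scale: "scale a (scale b v) = scale (a * b) v"
  by (simp add: scale_def fun_eq_iff)

lemma scale_zero: "scale 0 v = zvec"
  by (simp add: scale_def zvec_def)

lemma vsum_scale_eq:
  assumes "\<And>x. x \<in> I \<Longrightarrow> f x = scale (g x) v"
  shows "vsum f I = scale (sum g I) v"
  using assms by (simp add: vsum_def scale_def fun_eq_iff sum_distrib_right)

lemma amode_scale: "amode p k (scale a v) = scale a (amode p k v)"
  by (auto simp: amode_def scale_def fun_eq_iff algebra_simps)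

lemma amode_zvec: "amode p k zvec = zvec"
  by (simp add: amode_def zvec_def fun_eq_iff)

lemma amode_zero_bv: "amode p 0 (bv c M) = scale (of_nat (2*p) * of_rat c) (bv c M)"
  by (auto simp: amode_def bv_def fun_eq_iff scale_def)

lemma amode_create_bv: "amode p (- int n - 1) (bv c M) = bv c (add_mset n M)"
proof -
  have "nat (- (- int n - 1)) - 1 = n" by simp
  then show ?thesis
    by (simp add: amode_def bv_def fun_eq_iff) (metis insert_DiffM)
qed

lemma amode_annihilate_bv:
  "amode p (int n + 1) (bv c M)
    = scale (of_nat (2*p) * of_nat (n + 1) * of_nat (count M n)) (bv c (M - {#n#}))"
proof -
  have "amode p (int n + 1) (bv c M) c' M'
      = scale (of_nat (2*p) * of_nat (n + 1) * of_nat (count M n)) (bv c (M - {#n#})) c' M'"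
    for c' M'
    by (cases "c' = c \<and> add_mset n M' = M") (auto simp: amode_def bv_def scale_def)
  then show ?thesis by (auto simp: fun_eq_iff)
qed

lemma amode_create_annihilate_bv:
  "amode p (- int n - 1) (amode p (int n + 1) (bv c M))
    = scale (of_nat (2*p) * of_nat (n + 1) * of_nat (count M n)) (bv c M)"
proof (cases "n \<in># M")
  case True
  then show ?thesis
    by (simp only: amode_annihilate_bv amode_scale amode_create_bv insert_DiffM)
next
  case False
  then have "count M n = 0"
    by (simp add: not_in_iff)
  then show ?thesis
    by (simp only: amode_annihilate_bv amode_scale scale_zero amode_zvec of_nat_0 mult_zero_right)
qed

lemma aprod_create_bv:
  "aprod p (map (\<lambda>x. - int x - 1) xs) (bv c N) = bv c (N + mset xs)"
  by (induction xs) (simp_all add: aprod_def amode_create_bv)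

lemma aprod_replicate_zero_bv:
  "aprod p (replicate r 0) (bv c M) = scale ((of_nat (2*p) * of_rat c) ^ r) (bv c M)"
proof (induction r)
  case 0
  then show ?case by (simp add: aprod_def scale_def)
next
  case (Suc r)
  then show ?case
    by (simp add: aprod_def amode_scale amode_zero_bv scale_scale algebra_simps)
qed

section \<open>Partitions and the binomial series\<close>

lemma deg_empty [simp]: "deg {#} = 0"
  by (simp add: deg_def)

lemma deg_add_mset [simp]: "deg (add_mset x M) = deg M + x + 1"
  by (simp add: deg_def)

lemma deg_eq_sum_mset_size: "deg M = sum_mset M + size M"
  by (induction M) auto

lemma less_deg_of_mem: "x \<in># M \<Longrightarrow> x < deg M"
  by (induction M) auto

lemma deg_eq_0_iff: "deg M = 0 \<longleftrightarrow> M = {#}"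
  by (induction M) auto

lemma partitions_0: "{K. deg K = 0} = {{#}}"
  using deg_eq_0_iff by auto

lemma finite_partitions: "finite {K. deg K = d}"
proof (rule finite_subset)
  show "{K. deg K = d} \<subseteq> (\<Union>n\<in>{0..d}. multisets_of_size {0..<d} n)"
    using less_deg_of_mem by (fastforce simp: multisets_of_size_def deg_eq_sum_mset_size)
qed auto

lemma deg_eq_sum_count:
  assumes "finite A" "set_mset K \<subseteq> A"
  shows "deg K = (\<Sum>x\<in>A. count K x * (x + 1))"
  using assms
proof (induction K)
  case empty
  then show ?case by simp
next
  case (add y K)
  then have "(\<Sum>x\<in>A. count (add_mset y K) x * (x + 1))
      = (\<Sum>x\<in>A. count K x * (x + 1) + (if x = y then y + 1 else 0))"
    by (intro sum.cong) auto
  also have "\<dots> = (\<Sum>x\<in>A. count K x * (x + 1)) + (y + 1)"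
    using add.prems by (simp add: sum.distrib)
  finally show ?case using add by simp
qed

lemma deg_eq_sum_count_lessThan: "deg K = (\<Sum>x<deg K. count K x * (x + 1))"
  using less_deg_of_mem by (intro deg_eq_sum_count) auto

lemma sum_length_sorted_list_of_multiset:
  "sum_list (sorted_list_of_multiset K) + length (sorted_list_of_multiset K) = deg K"
proof -
  have "sum_list (sorted_list_of_multiset K) = sum_mset K"
    by (metis mset_sorted_list_of_multiset sum_mset_sum_list)
  moreover have "length (sorted_list_of_multiset K) = size K"
    by (metis mset_sorted_list_of_multiset size_mset)
  ultimately show ?thesis
    by (simp add: deg_eq_sum_mset_size)
qed

lemma prod_nth_sorted_list_of_multiset:
  "(\<Prod>t<length (sorted_list_of_multiset K). f (sorted_list_of_multiset K ! t)) = (\<Prod>x\<in>#K. f x)"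
  for f :: "nat \<Rightarrow> 'a::comm_monoid_mult"
proof -
  have "(\<Prod>t<length xs. f (xs ! t)) = prod_list (map f xs)" for xs
    by (simp add: prod.list_conv_set_nth atLeast0LessThan)
  moreover have "prod_list (map f xs) = (\<Prod>x\<in>#mset xs. f x)" for xs
    by (metis mset_map prod_mset_prod_list)
  ultimately show ?thesis
    by simp
qed

lemma pcoef_empty [simp]: "pcoef {#} = 1"
  by (simp add: pcoef_def)

lemma pcoef_nonzero: "pcoef K \<noteq> 0"
proof -
  have "(\<Prod>x\<in>#K. x + 1) \<noteq> (0::nat)" by (induction K) auto
  moreover have "(\<Prod>x\<in>set_mset K. fact (count K x)) \<noteq> (0::nat)" by (simp add: prod_zero_iff)
  ultimately show ?thesis unfolding pcoef_def by (simp del: of_nat_fact)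
qed

lemma prod_fact_count_add_mset:
  "(\<Prod>y\<in>set_mset (add_mset x K). fact (count (add_mset x K) y))
    = (count K x + 1) * (\<Prod>y\<in>set_mset K. fact (count K y) :: nat)"
proof -
  let ?A = "insert x (set_mset K)"
  have "(\<Prod>y\<in>set_mset K. fact (count K y)) = (\<Prod>y\<in>?A. fact (count K y) :: nat)"
    by (intro prod.mono_neutral_left) (auto simp: not_in_iff)
  moreover have "(\<Prod>y\<in>?A. fact (count K y)) = fact (count K x) * (\<Prod>y\<in>?A - {x}. fact (count K y) :: nat)"
    by (simp add: prod.insert_remove)
  moreover have "(\<Prod>y\<in>?A - {x}. fact (count (add_mset x K) y))
      = (\<Prod>y\<in>?A - {x}. fact (count K y) :: nat)"
    by (intro prod.cong) auto
  then have "(\<Prod>y\<in>?A. fact (count (add_mset x K) y))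
      = fact (count K x + 1) * (\<Prod>y\<in>?A - {x}. fact (count K y) :: nat)"
    by (simp add: prod.insert_remove)
  ultimately show ?thesis by (simp add: algebra_simps)
qed

lemma pcoef_add_mset:
  "pcoef (add_mset x K) = pcoef K / (of_nat (x + 1) * of_nat (count K x + 1))"
  unfolding pcoef_def prod_fact_count_add_mset
  by (simp del: of_nat_fact add: field_simps)

text \<open>With \<open>K\<close> encoding the partition \<open>\<lambda>\<close>, \<open>sum_mset K = |\<lambda>| - \<ell>(\<lambda>)\<close> and \<open>size K = \<ell>(\<lambda>)\<close>.\<close>

definition partition_weight :: "complex \<Rightarrow> nat multiset \<Rightarrow> complex" where
  "partition_weight X K = pcoef K * (-1) ^ sum_mset K * X ^ size K"

lemma partition_weight_add_mset:
  "partition_weight X (add_mset x K) * (of_nat (x + 1) * of_nat (count (add_mset x K) x))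
    = (-1) ^ x * X * partition_weight X K"
proof -
  have "(of_nat (x + 1) * of_nat (count K x + 1) :: complex) \<noteq> 0"
    by (simp only: of_nat_mult[symmetric] of_nat_eq_0_iff) simp
  then show ?thesis
    by (simp add: partition_weight_def pcoef_add_mset power_add del: of_nat_add)
qed

lemma sum_count_partition_weight:
  assumes "x < n"
  shows "(\<Sum>K | deg K = n. of_nat (count K x * (x + 1)) * partition_weight X K)
    = (-1) ^ x * X * (\<Sum>K | deg K = n - x - 1. partition_weight X K)"
proof -
  let ?P = "\<lambda>d. {K. deg K = d}"
  have sub: "add_mset x ` ?P (n - x - 1) \<subseteq> ?P n"
    using assms by auto
  have "(\<Sum>K\<in>?P n. of_nat (count K x * (x + 1)) * partition_weight X K)
      = (\<Sum>K\<in>add_mset x ` ?P (n - x - 1). of_nat (count K x * (x + 1)) * partition_weight X K)"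
  proof (rule sum.mono_neutral_right[OF finite_partitions sub], intro ballI)
    fix K assume K: "K \<in> ?P n - add_mset x ` ?P (n - x - 1)"
    have "x \<notin># K"
    proof
      assume "x \<in># K"
      then have K_eq: "K = add_mset x (K - {#x#})"
        by (rule insert_DiffM[symmetric])
      then have "deg K = deg (K - {#x#}) + x + 1"
        by (metis deg_add_mset)
      moreover have "deg K = n"
        using K by simp
      ultimately have "deg (K - {#x#}) = n - x - 1"
        by linarith
      with K K_eq show False
        by blast
    qed
    then show "of_nat (count K x * (x + 1)) * partition_weight X K = 0"
      by (simp add: not_in_iff)
  qed
  also have "\<dots> = (\<Sum>K\<in>?P (n - x - 1).
      of_nat (count (add_mset x K) x * (x + 1)) * partition_weight X (add_mset x K))"
    by (rule sum.reindex_cong[where l = "add_mset x"]) (auto simp: inj_on_def)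
  also have "\<dots> = (\<Sum>K\<in>?P (n - x - 1). (-1) ^ x * X * partition_weight X K)"
    by (intro sum.cong refl, subst partition_weight_add_mset[symmetric]) (simp add: algebra_simps)
  finally show ?thesis
    by (simp add: sum_distrib_left)
qed

lemma sum_partition_weight_rec:
  "of_nat n * (\<Sum>K | deg K = n. partition_weight X K)
    = (\<Sum>x<n. (-1) ^ x * X * (\<Sum>K | deg K = n - x - 1. partition_weight X K))"
proof -
  have "of_nat n * (\<Sum>K | deg K = n. partition_weight X K)
      = (\<Sum>K | deg K = n. \<Sum>x<n. of_nat (count K x * (x + 1)) * partition_weight X K)"
    unfolding sum_distrib_left
    by (intro sum.cong refl)
      (metis (mono_tags) deg_eq_sum_count_lessThan mem_Collect_eq of_nat_sum sum_distrib_right)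
  also have "\<dots> = (\<Sum>x<n. \<Sum>K | deg K = n. of_nat (count K x * (x + 1)) * partition_weight X K)"
    by (rule sum.swap)
  also have "\<dots> = (\<Sum>x<n. (-1) ^ x * X * (\<Sum>K | deg K = n - x - 1. partition_weight X K))"
    by (intro sum.cong refl sum_count_partition_weight) simp
  finally show ?thesis .
qed

lemma gbinomial_rec_sum:
  "of_nat n * (X gchoose n) = (\<Sum>x<n. (-1) ^ x * X * (X gchoose (n - x - 1)))"
  for X :: "'a::field_char_0"
proof (induction n)
  case 0
  then show ?case by simp
next
  case (Suc n)
  have "(\<Sum>x<Suc n. (-1) ^ x * X * (X gchoose (Suc n - x - 1)))
      = X * (X gchoose n) - (\<Sum>x<n. (-1) ^ x * X * (X gchoose (n - x - 1)))"
    by (subst sum.lessThan_Suc_shift) (simp add: sum_negf)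
  also have "\<dots> = of_nat (Suc n) * (X gchoose Suc n)"
    using Suc gbinomial_mult_1[of X n] by simp
  finally show ?case by simp
qed

lemma sum_partition_weight_eq_gbinomial:
  "(\<Sum>K | deg K = n. partition_weight X K) = X gchoose n"
proof (induction n rule: less_induct)
  case (less n)
  show ?case
  proof (cases "n = 0")
    case True
    then show ?thesis by (simp add: partitions_0 partition_weight_def)
  next
    case False
    have "of_nat n * (\<Sum>K | deg K = n. partition_weight X K) = of_nat n * (X gchoose n)"
      unfolding sum_partition_weight_rec gbinomial_rec_sum
      using less False by (intro sum.cong refl) auto
    with False show ?thesis by simp
  qed
qed

section \<open>The zero mode of \<open>H\<close>\<close>

lemma Hvec_eq_Sminus:
  assumes "p \<ge> 1"
  shows "Hvec p = Sminus p 1 (2*p - 1) (bv 0 {#})"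
proof -
  have shift: "eshift 1 (bv (-1) {#}) = bv 0 {#}"
    by (auto simp: eshift_def bv_def fun_eq_iff)
  have T: "Tplus p 1 0 (bv 0 {#}) = bv 0 {#}"
    by (simp add: Tplus_def partitions_0 vsum_def scale_def aprod_def)
  have d: "2 * of_nat p - 1 = (of_nat (2*p - 1) :: rat)"
    using assms by (simp add: of_nat_diff)
  show ?thesis
    unfolding Hvec_def Qop_def expmode_def linext_bv expmode_b_def
    by (simp add: vsum_def Let_def d shift T)
qed

lemma Hvec_e0_component:
  assumes "p \<ge> 1"
  shows "Hvec p 0 K = (if deg K = 2*p - 1 then pcoef K else 0)"
proof -
  have "Hvec p 0 K = (\<Sum>lam | deg lam = 2*p - 1. pcoef lam * bv 0 lam 0 K)"
    unfolding Hvec_eq_Sminus[OF assms] Sminus_def vsum_apply scale_apply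
    by (simp add: aprod_create_bv)
  also have "\<dots> = (if deg K = 2*p - 1 then pcoef K else 0)"
    by (simp add: bv_def finite_partitions if_distrib[where f="\<lambda>x. _ * x"] cong: if_cong)
  finally show ?thesis .
qed

lemma gbinomial_minus_one: "((-1::'a::field_char_0) gchoose k) = (-1) ^ k"
  using gbinomial_negated_upper[of "-1::'a" k] by (simp add: binomial_gbinomial[symmetric])

lemma prod_mset_gbinomial_minus_one:
  "(\<Prod>x\<in>#K. (-1::'a::field_char_0) gchoose x) = (-1) ^ sum_mset K"
  by (induction K) (simp_all add: gbinomial_minus_one power_add)

lemma fmode_bv:
  "fmode p w N (bv c M) = vsum (\<lambda>K. scale (w 0 K) (fmode_b p K N c M)) {K. w 0 K \<noteq> 0}"
  by (simp add: fmode_def linext_bv)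

lemma fmode_b_unfold:
  assumes "ks = sorted_list_of_multiset K" "r = length ks" "S = N + 1 - int r - int (sum_list ks)"
    "B = \<bar>S\<bar> + int (deg M)"
  shows "fmode_b p K N c M = vsum (\<lambda>js. scale (\<Prod>t<r. (of_int (- (js ! t) - 1) :: complex) gchoose (ks ! t))
      (aprod p (filter (\<lambda>j. j < 0) js @ filter (\<lambda>j. 0 \<le> j) js) (bv c M)))
    {js. length js = r \<and> set js \<subseteq> {-B..B} \<and> sum_list js = S}"
  unfolding fmode_b_def Let_def assms ..

text \<open>On the vacuum, a mode of total degree zero only involves \<open>\<alpha>(0)\<close>; the factors \<open>binom(-1, k)\<close>
  are the coefficients of \<open>\<alpha>(0) z\<^bsup>-1-k\<^esup>\<close> in \<open>\<partial>\<^sup>(\<^sup>k\<^sup>)\<alpha>(z)\<close>.\<close>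

lemma fmode_b_vacuum:
  assumes "int (deg K) = N + 1"
  shows "fmode_b p K N c {#}
    = scale ((-1) ^ sum_mset K * (of_nat (2*p) * of_rat c) ^ size K) (bv c {#})"
proof -
  define ks where "ks = sorted_list_of_multiset K"
  define r where "r = length ks"
  have r: "r = size K"
    unfolding r_def ks_def by (metis mset_sorted_list_of_multiset size_mset)
  have S: "N + 1 - int r - int (sum_list ks) = 0"
    using sum_length_sorted_list_of_multiset[of K] assms unfolding r_def ks_def by linarith
  have zero_lists: "{js. length js = r \<and> set js \<subseteq> {-(\<bar>0\<bar> + int (deg {#}))..\<bar>0\<bar> + int (deg {#})}
      \<and> sum_list js = 0} = {replicate r 0}"
    by (auto simp: replicate_length_same subset_iff sum_list_replicate intro!: replicate_eqI)
  have "fmode_b p K N c {#}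
      = scale (\<Prod>t<r. (-1 :: complex) gchoose (ks ! t)) (aprod p (replicate r 0) (bv c {#}))"
    unfolding fmode_b_unfold[OF ks_def r_def refl refl] S zero_lists
    by (simp add: vsum_def scale_def)
  also have "\<dots> = scale ((-1) ^ sum_mset K * (of_nat (2*p) * of_rat c) ^ size K) (bv c {#})"
    unfolding aprod_replicate_zero_bv scale_scale r_def ks_def prod_nth_sorted_list_of_multiset
    by (simp add: prod_mset_gbinomial_minus_one r[unfolded r_def ks_def])
  finally show ?thesis .
qed

lemma H0_vacuum:
  assumes "p \<ge> 1"
  shows "H0 p (bv c {#}) = scale ((of_nat (2*p) * of_rat c) gchoose (2*p - 1)) (bv c {#})"
proof -
  let ?X = "of_nat (2*p) * of_rat c :: complex"
  have support: "{K. Hvec p 0 K \<noteq> 0} = {K. deg K = 2*p - 1}"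
    using assms by (auto simp: Hvec_e0_component pcoef_nonzero)
  have "H0 p (bv c {#}) = scale (\<Sum>K | deg K = 2*p - 1. partition_weight ?X K) (bv c {#})"
    unfolding H0_def fmode_bv support
  proof (rule vsum_scale_eq)
    fix K assume "K \<in> {K. deg K = 2*p - 1}"
    then show "scale (Hvec p 0 K) (fmode_b p K (2 * int p - 2) c {#})
        = scale (partition_weight ?X K) (bv c {#})"
      using assms by (simp add: fmode_b_vacuum Hvec_e0_component scale_scale partition_weight_def
          mult.assoc)
  qed
  then show ?thesis
    by (simp add: sum_partition_weight_eq_gbinomial)
qed

section \<open>The zero mode of the conformal vector\<close>

text \<open>The eigenvalue of the normally ordered product \<open>\<alpha>(-n)\<alpha>(n)\<close> on \<open>bv c M\<close>.\<close>

definition pair_eigenvalue :: "nat \<Rightarrow> rat \<Rightarrow> nat multiset \<Rightarrow> nat \<Rightarrow> complex" where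
  "pair_eigenvalue p c M n =
    (if n = 0 then (of_nat (2*p) * of_rat c) ^ 2 else of_nat (2*p) * of_nat n * of_nat (count M (n - 1)))"

lemma aprod_normal_pair_bv:
  "aprod p (filter (\<lambda>j. j < 0) [a, -a] @ filter (\<lambda>j. 0 \<le> j) [a, -a]) (bv c M)
    = scale (pair_eigenvalue p c M (nat \<bar>a\<bar>)) (bv c M)"
proof -
  consider "a = 0" | "a > 0" | "a < 0"
    by linarith
  then show ?thesis
  proof cases
    case 1
    then show ?thesis
      by (simp add: aprod_def amode_zero_bv amode_scale scale_scale pair_eigenvalue_def power2_eq_square)
  next
    case 2
    define n where "n = nat a - 1"
    have "a = int n + 1" "nat \<bar>a\<bar> = Suc n"
      using 2 by (simp_all add: n_def)
    then show ?thesis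
      using 2 amode_create_annihilate_bv[of p n c M] by (simp add: aprod_def pair_eigenvalue_def)
  next
    case 3
    define n where "n = nat (- a) - 1"
    have "a = - int n - 1" "nat \<bar>a\<bar> = Suc n"
      using 3 by (simp_all add: n_def)
    then show ?thesis
      using 3 amode_create_annihilate_bv[of p n c M, unfolded add.commute[of "int n" 1]]
      by (simp add: aprod_def pair_eigenvalue_def)
  qed
qed

lemma zero_sum_pairs:
  "{js. length js = 2 \<and> set js \<subseteq> {-B..B} \<and> sum_list js = (0::int)} = (\<lambda>a. [a, -a]) ` {-B..B}"
proof (intro set_eqI iffI)
  fix js assume "js \<in> {js. length js = 2 \<and> set js \<subseteq> {-B..B} \<and> sum_list js = (0::int)}"
  then obtain x y where "js = [x, y]" "x + y = 0" "x \<in> {-B..B}"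
    by (auto simp: numeral_2_eq_2 length_Suc_conv)
  then show "js \<in> (\<lambda>a. [a, -a]) ` {-B..B}"
    by (auto simp: eq_neg_iff_add_eq_0)
qed auto

lemma sum_symmetric_interval:
  "(\<Sum>a\<in>{-int B..int B}. f (nat \<bar>a\<bar>)) = f 0 + 2 * (\<Sum>n<B. f (Suc n) :: 'a::comm_ring_1)"
proof (induction B)
  case 0
  then show ?case by simp
next
  case (Suc B)
  have "{-int (Suc B)..int (Suc B)} = insert (int (Suc B)) (insert (- int (Suc B)) {-int B..int B})"
    by auto
  then have "(\<Sum>a\<in>{-int (Suc B)..int (Suc B)}. f (nat \<bar>a\<bar>))
      = f (Suc B) + (f (Suc B) + (\<Sum>a\<in>{-int B..int B}. f (nat \<bar>a\<bar>)))"
    by (simp add: nat_add_distrib)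
  with Suc show ?case
    by (simp add: algebra_simps)
qed

lemma fmode_b_alpha1_square:
  "fmode_b p {#0, 0#} 1 c M
    = scale ((of_nat (2*p) * of_rat c) ^ 2 + 4 * of_nat p * of_nat (deg M)) (bv c M)"
proof -
  define B where "B = int (deg M)"
  have "fmode_b p {#0, 0#} 1 c M
      = vsum (\<lambda>js. scale (\<Prod>t<2. (of_int (- (js ! t) - 1) :: complex) gchoose ([0, 0] ! t))
          (aprod p (filter (\<lambda>j. j < 0) js @ filter (\<lambda>j. 0 \<le> j) js) (bv c M)))
        ((\<lambda>a. [a, -a]) ` {-B..B})"
    by (subst zero_sum_pairs[symmetric], rule fmode_b_unfold) (simp_all add: B_def)
  also have "\<dots> = vsum (\<lambda>a. scale (pair_eigenvalue p c M (nat \<bar>a\<bar>)) (bv c M)) {-B..B}"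
  proof -
    have "(\<Prod>t<2. (of_int (- ([a, -a] ! t) - 1) :: complex) gchoose ([0, 0] ! t)) = 1" for a
      by (simp add: numeral_2_eq_2 lessThan_Suc)
    then have "scale (\<Prod>t<2. (of_int (- ([a, -a] ! t) - 1) :: complex) gchoose ([0, 0] ! t))
        (aprod p (filter (\<lambda>j. j < 0) [a, -a] @ filter (\<lambda>j. 0 \<le> j) [a, -a]) (bv c M))
        = scale (pair_eigenvalue p c M (nat \<bar>a\<bar>)) (bv c M)" for a
      by (simp only: aprod_normal_pair_bv scale_scale mult_1)
    moreover have "inj_on (\<lambda>a::int. [a, -a]) {-B..B}"
      by (auto simp: inj_on_def)
    ultimately show ?thesis
      by (simp only: vsum_def sum.reindex comp_def)
  qed
  also have "\<dots> = scale (\<Sum>a\<in>{-B..B}. pair_eigenvalue p c M (nat \<bar>a\<bar>)) (bv c M)"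
    by (rule vsum_scale_eq) (rule refl)
  also have "(\<Sum>a\<in>{-B..B}. pair_eigenvalue p c M (nat \<bar>a\<bar>))
      = (of_nat (2*p) * of_rat c) ^ 2 + 4 * of_nat p * of_nat (deg M)"
  proof -
    have "(\<Sum>n<deg M. pair_eigenvalue p c M (Suc n))
        = of_nat (2*p) * of_nat (\<Sum>n<deg M. count M n * (n + 1))"
      by (simp add: pair_eigenvalue_def sum_distrib_left algebra_simps)
    also have "\<dots> = of_nat (2*p) * of_nat (deg M)"
      by (simp only: deg_eq_sum_count_lessThan[symmetric])
    finally show ?thesis
      unfolding B_def sum_symmetric_interval by (simp add: pair_eigenvalue_def)
  qed
  finally show ?thesis .
qed

lemma fmode_b_alpha2: "fmode_b p {#1#} 1 c M = scale (- (of_nat (2*p) * of_rat c)) (bv c M)"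
proof -
  have zero_list: "{js. length js = 1 \<and> set js \<subseteq> {-B..B} \<and> sum_list js = (0::int)} = {[0]}"
    if "B \<ge> 0" for B
    using that by (auto simp: length_Suc_conv)
  have "fmode_b p {#1#} 1 c M
      = vsum (\<lambda>js. scale (\<Prod>t<1. (of_int (- (js ! t) - 1) :: complex) gchoose ([1] ! t))
          (aprod p (filter (\<lambda>j. j < 0) js @ filter (\<lambda>j. 0 \<le> j) js) (bv c M))) {[0]}"
    by (subst zero_list[of "int (deg M)", symmetric], simp, rule fmode_b_unfold) simp_all
  then show ?thesis
    by (simp add: vsum_def aprod_def amode_zero_bv scale_def fun_eq_iff)
qed

definition conf_weight :: "nat \<Rightarrow> rat \<Rightarrow> nat multiset \<Rightarrow> rat" where
  "conf_weight p c M = of_nat (deg M) + of_nat p * c ^ 2 - (of_nat p - 1) * c"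

lemma L0_bv:
  assumes "p \<ge> 2"
  shows "L0 p (bv c M) = scale (of_rat (conf_weight p c M)) (bv c M)"
proof -
  let ?X = "of_nat (2*p) * of_rat c :: complex"
  let ?f = "\<lambda>K. omega p 0 K * (if K = {#1#} then - ?X else ?X ^ 2 + 4 * of_nat p * of_nat (deg M))"
  have support: "{K. omega p 0 K \<noteq> 0} = {{#0, 0#}, {#1#}}"
    using assms by (auto simp: omega_def)
  have "L0 p (bv c M) = scale (sum ?f {{#0, 0#}, {#1#}}) (bv c M)"
    unfolding L0_def fmode_bv support
    by (rule vsum_scale_eq)
      (auto simp: fmode_b_alpha1_square fmode_b_alpha2[unfolded One_nat_def] scale_scale)
  moreover have "sum ?f {{#0, 0#}, {#1#}} = of_rat (conf_weight p c M)"
  proof -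
    have "(of_nat p :: complex) \<noteq> 0"
      using assms by simp
    then show ?thesis
      by (simp add: omega_def conf_weight_def of_rat_add of_rat_mult of_rat_diff
          of_rat_power field_simps power2_eq_square)
  qed
  ultimately show ?thesis
    by simp
qed

lemma linext_diagonal:
  assumes "\<And>c M. T c M = scale (f c M) (bv c M)" and "finite (supp v)"
  shows "linext T v c M = f c M * v c M"
proof -
  have "linext T v c M = (\<Sum>x\<in>supp v. if x = (c, M) then f c M * v c M else 0)"
    unfolding linext_def assms(1) by (intro sum.cong) (auto simp: scale_def bv_def split: if_splits)
  then show ?thesis
    using assms(2) by (simp add: supp_def)
qed

lemma L0_apply:
  assumes "p \<ge> 2" and "finite (supp v)"
  shows "L0 p v c M = of_rat (conf_weight p c M) * v c M"
proof -
  have "L0 p v = linext (\<lambda>c M. L0 p (bv c M)) v"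
    by (simp add: L0_def fmode_def linext_bv)
  then show ?thesis
    using linext_diagonal[OF L0_bv[OF assms(1)] assms(2)] by simp
qed

lemma conf_weight_completed_square:
  assumes "p \<ge> 1"
  shows "conf_weight p c M
    = of_nat (deg M) + ((2 * of_nat p * c - (of_nat p - 1)) ^ 2 - (of_nat p - 1) ^ 2) / (4 * of_nat p)"
  using assms by (simp add: conf_weight_def field_simps power2_eq_square)

lemma hrs_eq_conf_weight:
  assumes "p \<ge> 1"
  shows "hrs p (of_nat (2*p) * of_rat c + 1) 1 = of_rat (conf_weight p c {#})"
  using assms by (simp add: hrs_def conf_weight_completed_square of_rat_add of_rat_mult of_rat_diff
      of_rat_divide of_rat_power power2_eq_square algebra_simps)

section \<open>The sectors of \<open>R(i,j,k)\<close>\<close>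

lemma ex1_cong_in_window:
  fixes N L a :: int
  assumes "N > 0"
  shows "\<exists>!l. L \<le> l \<and> l \<le> L + N - 1 \<and> (\<exists>s. l = a + N * s)"
proof (rule ex_ex1I)
  define l where "l = L + (a - L) mod N"
  have "l = a + N * (- ((a - L) div N))"
    unfolding l_def using div_mult_mod_eq[of "a - L" N] by (simp add: algebra_simps)
  moreover have "L \<le> l" "l \<le> L + N - 1"
    unfolding l_def using assms pos_mod_bound[of N "a - L"] pos_mod_sign[of N "a - L"] by auto
  ultimately show "\<exists>l. L \<le> l \<and> l \<le> L + N - 1 \<and> (\<exists>s. l = a + N * s)"
    by blast
next
  fix l1 l2
  assume 1: "L \<le> l1 \<and> l1 \<le> L + N - 1 \<and> (\<exists>s. l1 = a + N * s)"
     and 2: "L \<le> l2 \<and> l2 \<le> L + N - 1 \<and> (\<exists>s. l2 = a + N * s)"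
  then obtain s1 s2 where s: "l1 = a + N * s1" "l2 = a + N * s2"
    by blast
  have "N * (s1 - s2) < N * 1" "N * (s2 - s1) < N * 1"
    using 1 2 s by (auto simp: algebra_simps)
  then have "s1 - s2 < 1" "s2 - s1 < 1"
    using assms by (simp_all only: mult_less_cancel_left_pos)
  then have "s1 = s2"
    by simp
  then show "l1 = l2"
    using s by simp
qed

definition charge :: "nat \<Rightarrow> nat \<Rightarrow> nat \<Rightarrow> int \<Rightarrow> rat" where
  "charge p m i l = (of_int l - of_nat i / of_nat m) / (2 * of_nat p)"

lemma evec_eq_bv_charge: "evec p m i l = bv (charge p m i l) {#}"
  by (simp add: evec_def charge_def)

lemma charge_eq_iff: "p \<ge> 1 \<Longrightarrow> charge p m i l = charge p m i l' \<longleftrightarrow> l = l'"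
  by (auto simp: charge_def)

lemma of_rat_charge:
  "(of_rat (charge p m i l) :: 'a::field_char_0) = (of_int l - of_nat i / of_nat m) / (2 * of_nat p)"
  by (simp add: charge_def of_rat_divide of_rat_diff of_rat_mult)

lemma Rmod_coset_iff:
  assumes "p \<ge> 1" "m \<ge> 1"
  shows "(\<exists>s::int. c = (of_nat j - of_nat i / of_nat m) / (2 * of_nat p) + of_nat m * of_int s + of_nat k)
    \<longleftrightarrow> (\<exists>s. c = charge p m i (int j + 2 * int p * (int m * s + int k)))"
proof -
  have "(of_nat j - of_nat i / of_nat m) / (2 * of_nat p) + of_nat m * of_int s + of_nat k
      = charge p m i (int j + 2 * int p * (int m * s + int k))" for s
    using assms unfolding charge_def by (simp add: field_simps)
  then show ?thesis
    by simp
qed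

lemma evec_in_Rmod_iff:
  assumes "p \<ge> 1" "m \<ge> 1"
  shows "evec p m i l \<in> Rmod p m i j k \<longleftrightarrow> (\<exists>s. l = int j + 2 * int p * (int m * s + int k))"
proof -
  have "evec p m i l \<in> Rmod p m i j k \<longleftrightarrow>
      (\<exists>s. charge p m i l = charge p m i (int j + 2 * int p * (int m * s + int k)))"
    unfolding Rmod_def evec_eq_bv_charge Rmod_coset_iff[OF assms, symmetric]
    by (auto simp: supp_bv bv_apply)
  also have "\<dots> \<longleftrightarrow> (\<exists>s. l = int j + 2 * int p * (int m * s + int k))"
    using assms(1) by (simp only: charge_eq_iff)
  finally show ?thesis .
qed

lemma square_le_square_shift:
  fixes a P :: "'a::linordered_idom" and t :: int
  assumes "\<bar>a\<bar> < P"
  shows "a ^ 2 \<le> (a + 2 * P * of_int t) ^ 2"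
proof -
  consider "t = 0" | "t \<ge> 1" | "t \<le> -1"
    by linarith
  then have "\<bar>a\<bar> \<le> \<bar>a + 2 * P * of_int t\<bar>"
  proof cases
    case 1
    then show ?thesis by simp
  next
    case 2
    then have "2 * P * 1 \<le> 2 * P * of_int t"
      using assms by (intro mult_left_mono) auto
    then show ?thesis
      using assms by linarith
  next
    case 3
    then have "of_int t \<le> (-1::'a)"
      by (metis of_int_1 of_int_le_iff of_int_minus)
    then have "2 * P * of_int t \<le> 2 * P * (-1)"
      using assms by (intro mult_left_mono) auto
    then show ?thesis
      using assms by linarith
  qed
  then show ?thesis
    by (simp add: abs_le_square_iff)
qed

lemma conf_weight_window_le:
  assumes "p \<ge> 1" "0 < i" "i < m"
    and "- (int m - 1) * int p \<le> l" "l \<le> (int m + 1) * int p - 1"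
  shows "conf_weight p (charge p m i l) {#}
    \<le> conf_weight p (charge p m i (l + 2 * int p * int m * t)) M"
proof -
  define u :: rat where "u = of_int l - of_nat i / of_nat m - (of_nat p - 1)"
  have "0 < of_nat i / (of_nat m :: rat)" "of_nat i / (of_nat m :: rat) < 1"
    using assms(2,3) by (simp_all add: field_simps)
  moreover have "of_int (- (int m - 1) * int p) \<le> (of_int l :: rat)"
    "(of_int l :: rat) \<le> of_int ((int m + 1) * int p - 1)"
    using assms(4,5) by (simp_all only: of_int_le_iff)
  ultimately have u_bound: "\<bar>u\<bar> < of_nat m * of_nat p"
    unfolding u_def by (auto simp: algebra_simps abs_less_iff)
  define u' where "u' = u + 2 * (of_nat m * of_nat p) * of_int t"
  have "2 * of_nat p * charge p m i l - (of_nat p - 1) = u"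
    "2 * of_nat p * charge p m i (l + 2 * int p * int m * t) - (of_nat p - 1) = u'"
    using assms(1) by (simp_all add: charge_def u_def u'_def field_simps)
  moreover have "(u ^ 2 - (of_nat p - 1) ^ 2) / (4 * of_nat p) \<le> (u' ^ 2 - (of_nat p - 1) ^ 2) / (4 * of_nat p)"
    using square_le_square_shift[OF u_bound, of t] unfolding u'_def by (intro divide_right_mono) auto
  ultimately show ?thesis
    using assms(1) by (simp add: conf_weight_completed_square)
qed

lemma ex1_window_evec_in_Rmod:
  assumes "p \<ge> 1" "m \<ge> 1"
  shows "\<exists>!l. - (int m - 1) * int p \<le> l \<and> l \<le> (int m + 1) * int p - 1 \<and> evec p m i l \<in> Rmod p m i j k"
proof -
  have "(int m + 1) * int p - 1 = - (int m - 1) * int p + 2 * int p * int m - 1"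
    by (simp add: algebra_simps)
  then show ?thesis
    using ex1_cong_in_window[of "2 * int p * int m" "- (int m - 1) * int p" "int j + 2 * int p * int k"] assms
    by (simp add: evec_in_Rmod_iff[OF assms] algebra_simps)
qed

lemma Re_of_rat [simp]: "Re (of_rat q) = of_rat q"
  by (cases q) (simp add: of_rat_rat)

lemma Rmod_L0_eigenvalue_ge:
  assumes "p \<ge> 2" "0 < i" "i < m"
    and "- (int m - 1) * int p \<le> l" "l \<le> (int m + 1) * int p - 1"
    and "evec p m i l \<in> Rmod p m i j k"
    and v: "v \<in> Rmod p m i j k" "v \<noteq> zvec" "L0 p v = scale \<mu> v"
  shows "of_rat (conf_weight p (charge p m i l) {#}) \<le> Re \<mu>"
proof -
  have p: "p \<ge> 1" and m: "m \<ge> 1"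
    using assms by auto
  obtain c M where vcM: "v c M \<noteq> 0"
    using v(2) by (auto simp: zvec_def fun_eq_iff)
  have "finite (supp v)"
    using v(1) by (simp add: Rmod_def)
  then have "of_rat (conf_weight p c M) * v c M = \<mu> * v c M"
    using L0_apply[OF assms(1)] v(3) by (metis scale_apply)
  then have \<mu>: "\<mu> = of_rat (conf_weight p c M)"
    using vcM by simp
  obtain s' where c: "c = charge p m i (int j + 2 * int p * (int m * s' + int k))"
    using v(1) vcM Rmod_coset_iff[OF p m] by (auto simp: Rmod_def)
  obtain s where l: "l = int j + 2 * int p * (int m * s + int k)"
    using assms(6) evec_in_Rmod_iff[OF p m] by blast
  have "c = charge p m i (l + 2 * int p * int m * (s' - s))"
    unfolding c l by (simp add: algebra_simps)
  then have "conf_weight p (charge p m i l) {#} \<le> conf_weight p c M"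
    using conf_weight_window_le[OF p assms(2-5)] by simp
  then show ?thesis
    unfolding \<mu> by (simp add: of_rat_less_eq)
qed

theorem mainTheorem13:
  fixes p m i j k :: nat
  assumes "p \<ge> 2" and "m \<ge> 2" and "1 \<le> i" and "i \<le> m - 1"
    and "j \<le> 2 * p - 1" and "k \<le> m - 1"
  shows "(\<exists>!l::int. - (int m - 1) * int p \<le> l \<and> l \<le> (int m + 1) * int p - 1
              \<and> evec p m i l \<in> Rmod p m i j k)
       \<and> (\<forall>l::int. - (int m - 1) * int p \<le> l \<and> l \<le> (int m + 1) * int p - 1
              \<and> evec p m i l \<in> Rmod p m i j k \<longrightarrow>
            (let x = (of_int l - of_nat i / of_nat m :: complex);
                 h = hrs p (x + 1) 1 in
              L0 p (evec p m i l) = scale h (evec p m i l)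
            \<and> H0 p (evec p m i l) = scale (x gchoose (2 * p - 1)) (evec p m i l)
            \<and> (\<forall>v \<mu>. v \<in> Rmod p m i j k \<and> v \<noteq> zvec \<and> L0 p v = scale \<mu> v
                  \<longrightarrow> Re h \<le> Re \<mu>)))"
proof -
  \<comment> \<open>The bounds on \<open>j\<close> and \<open>k\<close> only normalise the labels of \<open>R(i,j,k)\<close>.\<close>
  have p: "p \<ge> 1" and m: "m \<ge> 1" and i: "0 < i" "i < m"
    using assms by auto
  show ?thesis
  proof (intro conjI allI impI, rule ex1_window_evec_in_Rmod[OF p m])
    fix l :: int
    assume l: "- (int m - 1) * int p \<le> l \<and> l \<le> (int m + 1) * int p - 1 \<and> evec p m i l \<in> Rmod p m i j k"
    have x: "(of_int l - of_nat i / of_nat m :: complex) = of_nat (2*p) * of_rat (charge p m i l)"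
      using p by (simp add: of_rat_charge)
    have h: "hrs p (of_nat (2*p) * of_rat (charge p m i l) + 1) 1
        = of_rat (conf_weight p (charge p m i l) {#})"
      by (rule hrs_eq_conf_weight[OF p])
    have "L0 p (evec p m i l) = scale (of_rat (conf_weight p (charge p m i l) {#})) (evec p m i l)"
      unfolding evec_eq_bv_charge by (rule L0_bv[OF assms(1)])
    moreover have "H0 p (evec p m i l)
        = scale ((of_nat (2*p) * of_rat (charge p m i l)) gchoose (2*p - 1)) (evec p m i l)"
      unfolding evec_eq_bv_charge by (rule H0_vacuum[OF p])
    moreover have "of_rat (conf_weight p (charge p m i l) {#}) \<le> Re \<mu>"
      if "v \<in> Rmod p m i j k" "v \<noteq> zvec" "L0 p v = scale \<mu> v" for v \<mu>
      using Rmod_L0_eigenvalue_ge[OF assms(1) i _ _ _ that] l by blast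
    ultimately show "let x = (of_int l - of_nat i / of_nat m :: complex); h = hrs p (x + 1) 1 in
        L0 p (evec p m i l) = scale h (evec p m i l)
      \<and> H0 p (evec p m i l) = scale (x gchoose (2 * p - 1)) (evec p m i l)
      \<and> (\<forall>v \<mu>. v \<in> Rmod p m i j k \<and> v \<noteq> zvec \<and> L0 p v = scale \<mu> v \<longrightarrow> Re h \<le> Re \<mu>)"
      unfolding Let_def x h by auto
  qed
qed
end
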